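(* Let $I_{CH}$ be an instance of $\varepsilon$-Consensus-Halving with $n$ agents having $k'$-block valuations $v_1,\dots,v_n$ on $[0,1]$, let $x_1\le\dots\le x_m$ be its points of interest, and for $j\in[m-1]$ let $c_{ij}\ge 0$ be the (constant) density of $v_i$ on $[x_j,x_{j+1}]$. Let $I_{SC}$ be the instance with mass distributions $\mu_1,\dots,\mu_n$, where $\mu_i$ has constant density $c_{ij}(x_{j+1}-x_j)$ on the unit square $s_j=[j,j+1]\times[j,j+1]$ for each $j\in[m-1]$ and density $0$ elsewhere. Then from every ($y$-monotone) SC-path with $k$ turns satisfying $|\mu_i(R^+)-\mu_i(R^-)|\le\varepsilon$ for all $i\in[n]$ one obtains a solution of $I_{CH}$ with at most $k+1$ cuts, i.e. a partition of $[0,1]$ by at most $k+1$ cut points into intervals alternately labelled $+$ and $-$, with $|v_i(\mathcal{I}^+)-v_i(\mathcal{I}^-)|\le\varepsilon$ for all $i$, where $\mathcal{I}^\pm$ is the union of intervals labelled $\pm$.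
   Context: A $k'$-block valuation $v_i$ on $[0,1]$ is given by at most $k'$ non-overlapping intervals $[a^\ell_{ij},a^r_{ij}]$ with densities $c_{ij}>0$ (density $0$ elsewhere), normalised so that $v_i([0,1])=1$. The points of interest are the endpoints $a^\ell_{ij},a^r_{ij}$ over all agents and blocks, sorted as $x_1\le\dots\le x_m$. A square-cut-path (SC-path) is a non-self-crossing directed path made of horizontal and vertical segments inside a bounding square containing all $s_j$, allowed to wrap around horizontally; it partitions this square into $R^+$ and $R^-$. A turn is a point where a horizontal and a vertical segment meet; $y$-monotone means the path never moves downwards. *)

theory Defs
  imports "HOL-Analysis.Analysis"
begin

text \<open>A block is a triple (left endpoint, right endpoint, density).\<close>
type_synonym block = "real \<times> real \<times> real"

definition block_valuation :: "nat \<Rightarrow> block list \<Rightarrow> bool" where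
  "block_valuation k' bs \<longleftrightarrow>
     length bs \<le> k' \<and>
     (\<forall>(l, r, c) \<in> set bs. 0 \<le> l \<and> l < r \<and> r \<le> 1 \<and> 0 < c) \<and>
     (\<forall>p < length bs. \<forall>q < length bs. p \<noteq> q \<longrightarrow>
         fst (snd (bs ! p)) \<le> fst (bs ! q) \<or> fst (snd (bs ! q)) \<le> fst (bs ! p)) \<and>
     sum_list (map (\<lambda>(l, r, c). c * (r - l)) bs) = 1"

definition val :: "block list \<Rightarrow> real set \<Rightarrow> real" where
  "val bs A = sum_list (map (\<lambda>(l, r, c). c * measure lborel (A \<inter> {l..r})) bs)"

definition poi :: "nat \<Rightarrow> (nat \<Rightarrow> block list) \<Rightarrow> real list" where
  "poi n B = sorted_list_of_set (\<Union>i\<in>{1..n}. \<Union>(l, r, c) \<in> set (B i). {l, r})"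

text \<open>1-based access: pt xs j = x_j.\<close>
definition pt :: "real list \<Rightarrow> nat \<Rightarrow> real" where
  "pt xs j = xs ! (j - 1)"

definition dens :: "(nat \<Rightarrow> block list) \<Rightarrow> real list \<Rightarrow> nat \<Rightarrow> nat \<Rightarrow> real" where
  "dens B xs i j = sum_list (map (\<lambda>(l, r, c).
      if l \<le> pt xs j \<and> pt xs (Suc j) \<le> r then c else 0) (B i))"

text \<open>Consensus-Halving with cut points ts; s is the label of the leftmost piece.
  ch_part ts s is the union of pieces labelled s (True = +).\<close>
definition ch_part :: "real list \<Rightarrow> bool \<Rightarrow> real set" where
  "ch_part ts s = {x \<in> {0..1}. even (card {i. i < length ts \<and> ts ! i < x}) = s}"

definition square :: "nat \<Rightarrow> (real \<times> real) set" where
  "square j = {real j .. real j + 1} \<times> {real j .. real j + 1}"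

definition mu :: "(nat \<Rightarrow> block list) \<Rightarrow> real list \<Rightarrow> nat \<Rightarrow> (real \<times> real) set \<Rightarrow> real" where
  "mu B xs i R = (\<Sum>j = 1..length xs - 1.
      dens B xs i j * (pt xs (Suc j) - pt xs j) * measure lborel (R \<inter> square j))"

text \<open>A y-monotone SC-path in the bounding square [a,a+L] x [b,b+L] is encoded by
  the increasing list hs of heights of its horizontal segments, which cut the square
  into horizontal strips 0..length hs.  In strip t the path is either a vertical segment
  at abscissa X (vert t = Some X), in which case R+ in that strip is the part left of X
  (ori t) or right of X (not ori t) -- the two sides swap when a horizontal segment wraps
  around -- or the path has no vertical segment there (only possible for the first/last
  strip, when the path starts/ends horizontally on a side), in which case the whole strip
  lies in R+ (ori t) or in R- (not ori t).\<close>
definition hgt :: "real \<Rightarrow> real \<Rightarrow> real list \<Rightarrow> nat \<Rightarrow> real" where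
  "hgt b L hs t = (b # hs @ [b + L]) ! t"

definition ymono_scpath ::
  "real \<Rightarrow> real \<Rightarrow> real \<Rightarrow> real list \<Rightarrow> (nat \<Rightarrow> real option) \<Rightarrow> (nat \<Rightarrow> bool) \<Rightarrow> bool" where
  "ymono_scpath a b L hs vert ori \<longleftrightarrow>
     sorted_wrt (<) hs \<and> (\<forall>h \<in> set hs. b \<le> h \<and> h \<le> b + L) \<and>
     (\<forall>t \<le> length hs. \<forall>X. vert t = Some X \<longrightarrow> a \<le> X \<and> X \<le> a + L) \<and>
     (\<forall>t. 0 < t \<and> t < length hs \<longrightarrow> vert t \<noteq> None) \<and>
     (length hs = 0 \<longrightarrow> vert 0 \<noteq> None) \<and>
     (\<forall>t. 1 \<le> t \<and> t \<le> length hs \<longrightarrow>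
        (case (vert (t - 1), vert t) of
           (Some X, Some X') \<Rightarrow> X \<noteq> X'
         | (None, None) \<Rightarrow> ori (t - 1) \<noteq> ori t
         | _ \<Rightarrow> True))"

text \<open>Number of turns: each horizontal segment meets the (at most two) adjacent
  vertical segments in one turn each.\<close>
definition sc_turns :: "real list \<Rightarrow> (nat \<Rightarrow> real option) \<Rightarrow> nat" where
  "sc_turns hs vert = (\<Sum>t = 1..length hs.
      (if vert (t - 1) \<noteq> None then 1 else 0) + (if vert t \<noteq> None then 1 else 0))"

definition Rplus ::
  "real \<Rightarrow> real \<Rightarrow> real \<Rightarrow> real list \<Rightarrow> (nat \<Rightarrow> real option) \<Rightarrow> (nat \<Rightarrow> bool) \<Rightarrow> (real \<times> real) set" where
  "Rplus a b L hs vert ori = (\<Union>t \<in> {0..length hs}.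
      ({a..a + L} \<times> {hgt b L hs t .. hgt b L hs (Suc t)}) \<inter>
      {p. case vert t of Some X \<Rightarrow> (if ori t then fst p < X else X < fst p) | None \<Rightarrow> ori t})"

definition Rminus ::
  "real \<Rightarrow> real \<Rightarrow> real \<Rightarrow> real list \<Rightarrow> (nat \<Rightarrow> real option) \<Rightarrow> (nat \<Rightarrow> bool) \<Rightarrow> (real \<times> real) set" where
  "Rminus a b L hs vert ori = ({a..a + L} \<times> {b..b + L}) - Rplus a b L hs vert ori"

end

theory Submission
  imports Defs
begin

text \<open>The squares s_j lie along the diagonal, and the piecewise affine map poi_interp sends
  the diagonal segment [j, j+1] onto [x_j, x_(j+1)].  The horizontal segments of a y-monotone
  SC-path cut the bounding square into horizontal strips, each containing at most one vertical
  segment.  Transport the path to [0,1]: a horizontal segment at height h becomes a cut at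
  poi_interp h, and the vertical segment of a strip, at abscissa X, becomes a single cut inside
  the image of the rows of that strip lying in the square of index floor X, dividing this image
  in the ratio in which X divides [floor X, floor X + 1].  Then for every square s_j the
  + part of [x_j, x_(j+1)] has length (x_(j+1) - x_j) area(R+ \<inter> s_j), so every agent values the
  + part as mu_i(R+) and the - part as mu_i(R-).  Since all strips except possibly the first
  and the last contain a vertical segment, there are at most k + 1 cuts.\<close>

lemma fmeasurable_Icc_real [simp]: "{u..v::real} \<in> fmeasurable lborel"
  by (metis cbox_interval fmeasurable_cbox)

lemma measure_lborel_between:
  fixes S :: "real set"
  assumes "{u<..<v} \<subseteq> S" "S \<subseteq> {u..v}"
  shows "S \<in> fmeasurable lborel" "measure lborel S = max 0 (v - u)"
proof -
  have S: "S = {u<..<v} \<union> (S \<inter> {u, v})" using assms by auto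
  have null: "S \<inter> {u, v} \<in> null_sets lborel" by (rule finite_imp_null_set_lborel) auto
  have "S \<in> sets lborel" by (subst S) (use null in auto)
  with assms(2) show "S \<in> fmeasurable lborel" by (intro fmeasurableI2[OF fmeasurable_Icc_real])
  have "measure lborel S = measure lborel {u<..<v}"
    by (subst S, rule measure_Un_null_set) (use null in auto)
  then show "measure lborel S = max 0 (v - u)" by (cases "u \<le> v") auto
qed

lemma measure_lborel_Times:
  fixes A B :: "real set"
  assumes "A \<in> fmeasurable lborel" "B \<in> fmeasurable lborel"
  shows "A \<times> B \<in> fmeasurable lborel"
    "measure lborel (A \<times> B) = measure lborel A * measure lborel B"
proof -
  have sets: "A \<in> sets lborel" "B \<in> sets lborel" using assms by auto
  have emeasure: "emeasure lborel (A \<times> B) = emeasure lborel A * emeasure lborel B"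
    using lborel.emeasure_pair_measure_Times[OF sets] by (simp add: lborel_prod)
  have "A \<times> B \<in> sets lborel" using sets by (metis lborel_prod pair_measureI)
  then show "A \<times> B \<in> fmeasurable lborel"
    using emeasure assms by (auto simp: fmeasurable_def ennreal_mult_less_top)
  show "measure lborel (A \<times> B) = measure lborel A * measure lborel B"
    using emeasure assms by (simp add: measure_def enn2real_mult)
qed

lemma measure_eq_if_eq_outside_finite:
  fixes A B :: "real set"
  assumes "A \<in> sets lborel" "B \<in> sets lborel" "finite F" "A - F = B - F"
  shows "measure lborel A = measure lborel B"
proof -
  have null: "F \<in> null_sets lborel" using assms(3) by (rule finite_imp_null_set_lborel)
  have "measure lborel A = measure lborel (A - F)" using measure_Diff_null_set[OF assms(1) null] by simp
  also have "\<dots> = measure lborel B" using measure_Diff_null_set[OF assms(2) null] assms(4) by simp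
  finally show ?thesis .
qed

lemma measure_Int_Icc_split:
  fixes A :: "real set"
  assumes "A \<in> sets lborel" "u \<le> v" "v \<le> w"
  shows "measure lborel (A \<inter> {u..w}) = measure lborel (A \<inter> {u..v}) + measure lborel (A \<inter> {v..w})"
proof -
  have "A \<inter> {u..w} = (A \<inter> {u..v}) \<union> (A \<inter> {v..w})" using assms by auto
  moreover have "AE x in lborel. x \<notin> A \<inter> {u..v} \<or> x \<notin> A \<inter> {v..w}"
    by (rule AE_I'[of "{v}"]) (auto intro: finite_imp_null_set_lborel)
  moreover have "A \<inter> {c..d} \<in> fmeasurable lborel" for c d :: real
    using assms(1) by (intro fmeasurableI2[OF fmeasurable_Icc_real]) auto
  ultimately show ?thesis by (simp add: measure_Un_AE)
qed

lemma measure_Int_Icc_telescope: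
  fixes A :: "real set" and g :: "nat \<Rightarrow> real"
  assumes "A \<in> sets lborel" "p \<le> q" "\<And>i i'. p \<le> i \<Longrightarrow> i \<le> i' \<Longrightarrow> i' \<le> q \<Longrightarrow> g i \<le> g i'"
  shows "measure lborel (A \<inter> {g p..g q}) = (\<Sum>i = p..<q. measure lborel (A \<inter> {g i..g (Suc i)}))"
  using assms(2)
proof (induction q rule: dec_induct)
  case base
  have "A \<inter> {g p..g p} \<in> null_sets lborel" by (rule finite_imp_null_set_lborel) simp
  then show ?case by (simp add: measure_eq_0_null_sets)
next
  case (step q)
  have "measure lborel (A \<inter> {g p..g (Suc q)})
      = measure lborel (A \<inter> {g p..g q}) + measure lborel (A \<inter> {g q..g (Suc q)})"
    using step.hyps assms(3) by (intro measure_Int_Icc_split[OF assms(1)]) auto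
  then show ?case using step.IH step.hyps by simp
qed

section \<open>Cut sequences\<close>

definition changes_only_at :: "real set \<Rightarrow> (real \<Rightarrow> bool) \<Rightarrow> bool" where
  "changes_only_at Q f \<longleftrightarrow> (\<forall>x y. x \<le> y \<longrightarrow> {x..y} \<inter> Q = {} \<longrightarrow> f x = f y)"

lemma changes_only_atD: "changes_only_at Q f \<Longrightarrow> x \<le> y \<Longrightarrow> {x..y} \<inter> Q = {} \<Longrightarrow> f x = f y"
  by (simp add: changes_only_at_def)

lemma changes_only_at_truncate:
  assumes f: "changes_only_at (insert q Q) f" and p: "p < q" "\<forall>a\<in>Q. a < p"
  shows "changes_only_at Q (\<lambda>x. f (min x p))"
  unfolding changes_only_at_def
proof (intro allI impI)
  fix x y :: real assume xy: "x \<le> y" "{x..y} \<inter> Q = {}"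
  have "w \<notin> {min x p..min y p}" if w: "w \<in> insert q Q" for w
  proof
    assume w_in: "w \<in> {min x p..min y p}"
    then have "w \<le> p" by simp
    then have "w \<in> Q" using w p(1) by auto
    then have "w < p" using p(2) by blast
    then have "x \<le> w" using w_in by (simp add: min_le_iff_disj)
    moreover have "w \<le> y" using w_in by simp
    ultimately show False using \<open>w \<in> Q\<close> xy(2) by auto
  qed
  then have "{min x p..min y p} \<inter> insert q Q = {}" by blast
  then show "f (min x p) = f (min y p)" using xy(1) by (intro changes_only_atD[OF f]) auto
qed

lemma alternating_cuts_exist:
  fixes f :: "real \<Rightarrow> bool" and Q :: "real set"
  assumes "finite Q" and "changes_only_at Q f"
  shows "\<exists>ts s. sorted ts \<and> set ts \<subseteq> Q \<and> length ts \<le> card Q \<and>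
           (\<forall>x. x \<notin> Q \<longrightarrow> (even (length (filter (\<lambda>t. t < x) ts)) = s) = f x)"
  using assms
proof (induction Q arbitrary: f rule: finite_linorder_max_induct)
  case empty
  have "f x = f 0" for x
    using changes_only_atD[OF empty, of x 0] changes_only_atD[OF empty, of 0 x] by (cases "x \<le> 0") auto
  then show ?case by (intro exI[of _ "[]"] exI[of _ "f 0"]) auto
next
  case (insert q Q)
  note const = changes_only_atD[OF insert.prems]
  obtain p where p: "p < q" "\<forall>a\<in>Q. a < p"
  proof (cases "Q = {}")
    case False
    then have "Max Q < q" "\<forall>a\<in>Q. a \<le> Max Q" using insert.hyps by auto
    moreover obtain p where "Max Q < p" "p < q" using dense[OF \<open>Max Q < q\<close>] by blast
    ultimately show ?thesis using that[of p] by (meson le_less_trans)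
  qed (intro that[of "q - 1"], auto)
  define f0 where "f0 x = f (min x p)" for x
  obtain ts s where ts: "sorted ts" "set ts \<subseteq> Q" "length ts \<le> card Q"
    and parity: "\<forall>x. x \<notin> Q \<longrightarrow> (even (length (filter (\<lambda>t. t < x) ts)) = s) = f0 x"
    using insert.IH[OF changes_only_at_truncate[OF insert.prems p]] unfolding f0_def by blast
  have below: "f x = f0 x" if "x < q" for x
  proof (cases "x \<le> p")
    case False
    then have "{p..x} \<inter> insert q Q = {}" using that p by fastforce
    then show ?thesis using False const[of p x] by (simp add: f0_def)
  qed (simp add: f0_def)
  have above: "f x = f (q + 1)" if "q < x" for x
  proof -
    have "{min x (q + 1)..max x (q + 1)} \<inter> insert q Q = {}" using that insert.hyps(2) by fastforce
    then show ?thesis using const[of "min x (q + 1)" "max x (q + 1)"] by (cases "x \<le> q + 1") auto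
  qed
  have f0_above: "f0 x = f p" if "q < x" for x using that p by (simp add: f0_def)
  have ts_below: "\<forall>t\<in>set ts. t < q" using ts(2) insert.hyps(2) by auto
  define ts' where "ts' = (if f (q + 1) = f p then ts else ts @ [q])"
  show ?case
  proof (intro exI[of _ ts'] exI[of _ s] conjI allI impI)
    show "sorted ts'" using ts(1) ts_below by (auto simp: ts'_def sorted_append less_imp_le)
    show "set ts' \<subseteq> insert q Q" using ts(2) by (auto simp: ts'_def)
    show "length ts' \<le> card (insert q Q)" using ts(3) insert.hyps by (auto simp: ts'_def)
    fix x assume x: "x \<notin> insert q Q"
    have parity_x: "(even (length (filter (\<lambda>t. t < x) ts)) = s) = f0 x" using parity x by simp
    consider "x < q" | "q < x" using x by fastforce
    then show "(even (length (filter (\<lambda>t. t < x) ts')) = s) = f x"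
    proof cases
      case 1
      then have "filter (\<lambda>t. t < x) ts' = filter (\<lambda>t. t < x) ts" by (simp add: ts'_def)
      then show ?thesis using parity_x below[OF 1] by simp
    next
      case 2
      show ?thesis
      proof (cases "f (q + 1) = f p")
        case True
        then show ?thesis using parity_x above[OF 2] f0_above[OF 2] by (simp add: ts'_def)
      next
        case False
        then have "length (filter (\<lambda>t. t < x) ts') = Suc (length (filter (\<lambda>t. t < x) ts))"
          using 2 by (simp add: ts'_def)
        then show ?thesis using False parity_x above[OF 2] f0_above[OF 2] by auto
      qed
    qed
  qed
qed

lemma ch_part_eq: "ch_part ts s = {x \<in> {0..1}. even (length (filter (\<lambda>t. t < x) ts)) = s}"
  by (simp add: ch_part_def length_filter_conv_card)

lemma changes_only_at_clamp:
  assumes f: "changes_only_at Q f"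
  shows "changes_only_at (Q \<inter> {0..1}) (\<lambda>x. f (max 0 (min 1 x)))"
  unfolding changes_only_at_def
proof (intro allI impI)
  fix x y :: real assume xy: "x \<le> y" "{x..y} \<inter> (Q \<inter> {0..1}) = {}"
  define x' where "x' = max 0 (min 1 x)"
  define y' where "y' = max 0 (min 1 y)"
  show "f x' = f y'"
  proof (cases "x' = y'")
    case False
    have "x' \<le> y'" unfolding x'_def y'_def using xy(1) by (intro max.mono min.mono) simp_all
    with False have lt: "x' < y'" by simp
    have "x \<le> x'"
    proof (cases "x < 1")
      case False
      then have "x' = 1" "y' = 1" using xy(1) by (simp_all add: x'_def y'_def)
      with lt show ?thesis by simp
    qed (simp add: x'_def)
    moreover have "y' \<le> y"
    proof (cases "0 < y")
      case False
      then have "x' = 0" "y' = 0" using xy(1) by (simp_all add: x'_def y'_def)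
      with lt show ?thesis by simp
    qed (simp add: y'_def)
    moreover have "0 \<le> x'" "y' \<le> 1" by (simp_all add: x'_def y'_def)
    ultimately have "{x'..y'} \<subseteq> {x..y} \<inter> {0..1}" by auto
    then have "{x'..y'} \<inter> Q = {}" using xy(2) by blast
    then show ?thesis using lt by (intro changes_only_atD[OF f]) simp_all
  qed simp
qed

lemma alternating_cuts_in_unit_interval:
  assumes "finite Q" "changes_only_at Q f"
  obtains ts s where "sorted ts" "set ts \<subseteq> {0..1}" "length ts \<le> card Q"
    "\<And>x. x \<in> {0..1} - Q \<Longrightarrow> x \<in> ch_part ts s \<longleftrightarrow> f x"
proof -
  have "finite (Q \<inter> {0..1})" using assms(1) by simp
  then obtain ts s where ts: "sorted ts" "set ts \<subseteq> Q \<inter> {0..1}" "length ts \<le> card (Q \<inter> {0..1})"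
    and parity: "\<forall>x. x \<notin> Q \<inter> {0..1} \<longrightarrow> (even (length (filter (\<lambda>t. t < x) ts)) = s) = f (max 0 (min 1 x))"
    using alternating_cuts_exist changes_only_at_clamp[OF assms(2)] by blast
  show thesis
  proof (rule that)
    show "sorted ts" "set ts \<subseteq> {0..1}" using ts(1,2) by auto
    show "length ts \<le> card Q" using ts(3) card_mono[OF assms(1), of "Q \<inter> {0..1}"] by simp
    fix x assume x: "x \<in> {0..1} - Q"
    then have "max 0 (min 1 x) = x" by simp
    then show "x \<in> ch_part ts s \<longleftrightarrow> f x" using parity x by (simp add: ch_part_eq)
  qed
qed

lemma sets_borel_count_less:
  "{x :: real. P (length (filter (\<lambda>t. t < x) ts))} \<in> sets borel"
proof (induction ts arbitrary: P)
  case Nil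
  then show ?case by (cases "P 0") auto
next
  case (Cons t ts)
  have "{x :: real. P (length (filter (\<lambda>t. t < x) (t # ts)))} =
      ({x. t < x} \<inter> {x. P (Suc (length (filter (\<lambda>t. t < x) ts)))}) \<union>
      ({x. x \<le> t} \<inter> {x. P (length (filter (\<lambda>t. t < x) ts))})"
    by auto
  then show ?case using Cons[of P] Cons[of "\<lambda>c. P (Suc c)"] by auto
qed

lemma ch_part_sets: "ch_part ts s \<in> sets lborel"
proof -
  have "ch_part ts s = {0..1} \<inter> {x. even (length (filter (\<lambda>t. t < x) ts)) = s}"
    unfolding ch_part_eq by auto
  then show ?thesis using sets_borel_count_less[of "\<lambda>c. even c = s" ts] by auto
qed

lemma measure_ch_part_Not:
  assumes "{u..v} \<subseteq> {0..1}" "u \<le> v"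
  shows "measure lborel (ch_part ts (\<not> s) \<inter> {u..v}) = (v - u) - measure lborel (ch_part ts s \<inter> {u..v})"
proof -
  have "ch_part ts (\<not> s) \<inter> {u..v} = {u..v} - ch_part ts s \<inter> {u..v}"
    using assms(1) unfolding ch_part_def by auto
  moreover have "measure lborel ({u..v} - ch_part ts s \<inter> {u..v})
      = measure lborel {u..v} - measure lborel (ch_part ts s \<inter> {u..v})"
    using ch_part_sets by (intro measurable_measure_Diff) auto
  ultimately show ?thesis using assms(2) by simp
qed

section \<open>Valuations at the points of interest\<close>

lemma pt_Suc: "pt xs (Suc j) = xs ! j"
  by (simp add: pt_def)

lemma set_poi: "set (poi n B) = (\<Union>i\<in>{1..n}. \<Union>(l, r, c) \<in> set (B i). {l, r})"
proof -
  have "finite (\<Union>i\<in>{1..n}. \<Union>(l, r, c) \<in> set (B i). {l, r})" by (auto split: prod.splits)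
  then show ?thesis by (simp add: poi_def)
qed

lemma poi_strict_sorted: "sorted_wrt (<) (poi n B)"
  by (simp add: poi_def)

lemma block_in_poi:
  assumes "i \<in> {1..n}" "block_valuation k' (B i)" "(l, r, c) \<in> set (B i)"
  shows "l \<in> set (poi n B)" "r \<in> set (poi n B)" "0 \<le> l" "l < r" "r \<le> 1"
proof -
  show "l \<in> set (poi n B)" "r \<in> set (poi n B)" using assms(1,3) by (force simp: set_poi)+
  show "0 \<le> l" "l < r" "r \<le> 1" using assms(2,3) by (auto simp: block_valuation_def)
qed

lemma set_poi_subset:
  assumes "\<forall>i \<in> {1..n}. block_valuation k' (B i)"
  shows "set (poi n B) \<subseteq> {0..1}"
proof
  fix x assume "x \<in> set (poi n B)"
  then obtain i l r c where "i \<in> {1..n}" "(l, r, c) \<in> set (B i)" "x = l \<or> x = r"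
    by (auto simp: set_poi)
  then show "x \<in> {0..1}" using block_in_poi[of i n k' B l r c] assms by force
qed

lemma strict_sorted_nth_le_iff:
  fixes xs :: "'a :: linorder list"
  assumes "sorted_wrt (<) xs" "i < length xs" "j < length xs"
  shows "xs ! i \<le> xs ! j \<longleftrightarrow> i \<le> j"
  using assms sorted_wrt_nth_less[OF assms(1)] sorted_nth_mono[OF strict_sorted_imp_sorted[OF assms(1)]]
  by (meson leD leI)

lemma block_measure_eq_sum:
  assumes xs: "sorted_wrt (<) xs" and lr: "l \<in> set xs" "r \<in> set xs" "l < r"
    and A: "A \<in> sets lborel"
  shows "c * measure lborel (A \<inter> {l..r}) = (\<Sum>j = 1..length xs - 1.
           (if l \<le> pt xs j \<and> pt xs (Suc j) \<le> r then c else 0) * measure lborel (A \<inter> {pt xs j..pt xs (Suc j)}))"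
proof -
  define M where "M j = measure lborel (A \<inter> {pt xs j..pt xs (Suc j)})" for j
  obtain p q where pq: "p < length xs" "q < length xs" and l: "l = pt xs (Suc p)" and r: "r = pt xs (Suc q)"
    using lr(1,2) by (metis in_set_conv_nth pt_Suc)
  have "p < q" using lr(3) strict_sorted_nth_le_iff[OF xs pq(2,1)] by (simp add: l r pt_Suc)
  have inside: "(l \<le> pt xs j \<and> pt xs (Suc j) \<le> r) \<longleftrightarrow> j \<in> {Suc p..<Suc q}"
    if "j \<in> {1..length xs - 1}" for j
  proof -
    have j: "j - 1 < length xs" "j < length xs" "1 \<le> j" using that by auto
    have "l \<le> pt xs j \<longleftrightarrow> p \<le> j - 1"
      using strict_sorted_nth_le_iff[OF xs pq(1) j(1)] by (simp add: l pt_def)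
    moreover have "pt xs (Suc j) \<le> r \<longleftrightarrow> j \<le> q"
      using strict_sorted_nth_le_iff[OF xs j(2) pq(2)] by (simp add: r pt_def)
    ultimately show ?thesis using j(3) by auto
  qed
  have "(\<Sum>j = 1..length xs - 1. (if l \<le> pt xs j \<and> pt xs (Suc j) \<le> r then c else 0) * M j)
      = (\<Sum>j \<in> {1..length xs - 1}. if j \<in> {Suc p..<Suc q} then c * M j else 0)"
    using inside by (intro sum.cong) auto
  also have "\<dots> = (\<Sum>j \<in> {1..length xs - 1} \<inter> {Suc p..<Suc q}. c * M j)"
    by (simp add: sum.inter_restrict)
  also have "{1..length xs - 1} \<inter> {Suc p..<Suc q} = {Suc p..<Suc q}"
    using pq by auto
  also have "(\<Sum>j = Suc p..<Suc q. c * M j) = c * measure lborel (A \<inter> {l..r})"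
    unfolding sum_distrib_left[symmetric] M_def l r using \<open>p < q\<close> pq
    by (subst measure_Int_Icc_telescope[OF A])
      (auto simp: pt_def intro: sorted_nth_mono[OF strict_sorted_imp_sorted[OF xs]])
  finally show ?thesis by (simp add: M_def)
qed

lemma val_eq_sum_poi_intervals:
  assumes xs: "sorted_wrt (<) xs" and bs: "\<forall>(l, r, c) \<in> set bs. l \<in> set xs \<and> r \<in> set xs \<and> l < r"
    and A: "A \<in> sets lborel"
  shows "val bs A = (\<Sum>j = 1..length xs - 1.
           sum_list (map (\<lambda>(l, r, c). if l \<le> pt xs j \<and> pt xs (Suc j) \<le> r then c else 0) bs)
           * measure lborel (A \<inter> {pt xs j..pt xs (Suc j)}))"
  using bs
proof (induction bs)
  case Nil
  then show ?case by (simp add: val_def)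
next
  case (Cons blk bs)
  obtain l r c where blk: "blk = (l, r, c)" by (cases blk)
  then have "val (blk # bs) A = c * measure lborel (A \<inter> {l..r}) + val bs A"
    by (simp add: val_def)
  with Cons blk show ?case
    by (simp add: block_measure_eq_sum[OF xs _ _ _ A] sum.distrib[symmetric] distrib_right)
qed

lemma val_eq_mu:
  assumes xs: "sorted_wrt (<) xs" and blocks: "\<forall>(l, r, c) \<in> set (B i). l \<in> set xs \<and> r \<in> set xs \<and> l < r"
    and A: "A \<in> sets lborel"
    and proportional: "\<And>j. j \<in> {1..length xs - 1} \<Longrightarrow>
      measure lborel (A \<inter> {pt xs j..pt xs (Suc j)}) = (pt xs (Suc j) - pt xs j) * measure lborel (R \<inter> square j)"
  shows "val (B i) A = mu B xs i R"
  unfolding val_eq_sum_poi_intervals[OF xs blocks A] mu_def dens_def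
  by (intro sum.cong) (simp_all add: proportional)

section \<open>Transporting a y-monotone path to the unit interval\<close>

text \<open>poi_interp xs maps [j, j+1] affinely onto [x_j, x_(j+1)] for 1 \<le> j < length xs.\<close>
definition poi_interp :: "real list \<Rightarrow> real \<Rightarrow> real" where
  "poi_interp xs y = xs ! 0 + (\<Sum>i = 1..length xs - 1. (pt xs (Suc i) - pt xs i) * max 0 (min 1 (y - real i)))"

lemma pt_mono: "sorted xs \<Longrightarrow> 1 \<le> i \<Longrightarrow> i \<le> i' \<Longrightarrow> i' \<le> length xs \<Longrightarrow> pt xs i \<le> pt xs i'"
  by (auto simp: pt_def intro: sorted_nth_mono)

lemma mono_poi_interp:
  assumes "sorted xs"
  shows "mono (poi_interp xs)"
proof
  fix y y' :: real assume "y \<le> y'"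
  have "(pt xs (Suc i) - pt xs i) * max 0 (min 1 (y - real i)) \<le> (pt xs (Suc i) - pt xs i) * max 0 (min 1 (y' - real i))"
    if "i \<in> {1..length xs - 1}" for i
    using that \<open>y \<le> y'\<close> pt_mono[OF assms, of i "Suc i"] by (intro mult_left_mono) auto
  then show "poi_interp xs y \<le> poi_interp xs y'"
    unfolding poi_interp_def by (intro add_left_mono sum_mono) auto
qed

lemma poi_interp_affine:
  assumes j: "j \<in> {1..length xs - 1}" and y: "real j \<le> y" "y \<le> real j + 1"
  shows "poi_interp xs y = pt xs j + (pt xs (Suc j) - pt xs j) * (y - real j)"
proof -
  define f where "f i = (pt xs (Suc i) - pt xs i) * max 0 (min 1 (y - real i))" for i
  have split: "{1..length xs - 1} = {1..<j} \<union> {j} \<union> {Suc j..length xs - 1}" using j by auto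
  have "(\<Sum>i = 1..length xs - 1. f i) = (\<Sum>i = 1..<j. f i) + f j + (\<Sum>i = Suc j..length xs - 1. f i)"
    unfolding split by (subst sum.union_disjoint, auto)+
  moreover have "(\<Sum>i = 1..<j. f i) = (\<Sum>i = 1..<j. pt xs (Suc i) - pt xs i)"
    using y by (intro sum.cong) (auto simp: f_def)
  moreover have "(\<Sum>i = 1..<j. pt xs (Suc i) - pt xs i) = pt xs j - xs ! 0"
    using sum_Suc_diff'[of 1 j "pt xs"] j by (simp add: pt_def)
  moreover have "(\<Sum>i = Suc j..length xs - 1. f i) = 0"
    using y by (intro sum.neutral) (auto simp: f_def)
  moreover have "f j = (pt xs (Suc j) - pt xs j) * (y - real j)"
    using y by (simp add: f_def)
  ultimately show ?thesis
    by (simp add: poi_interp_def f_def[symmetric])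
qed

lemma poi_interp_of_nat:
  assumes "j \<in> {1..length xs - 1}"
  shows "poi_interp xs (real j) = pt xs j" "poi_interp xs (real j + 1) = pt xs (Suc j)"
  using poi_interp_affine[OF assms] by simp_all

lemma poi_interp_diff:
  assumes xs: "sorted xs" and j: "j \<in> {1..length xs - 1}" and uv: "real j \<le> u" "v \<le> real j + 1"
  shows "max 0 (poi_interp xs v - poi_interp xs u) = (pt xs (Suc j) - pt xs j) * max 0 (v - u)"
proof (cases "u \<le> v")
  case True
  have "poi_interp xs v - poi_interp xs u = (pt xs (Suc j) - pt xs j) * (v - u)"
    using poi_interp_affine[OF j, of u] poi_interp_affine[OF j, of v] uv True
    by (simp add: algebra_simps)
  moreover have "0 \<le> pt xs (Suc j) - pt xs j" using pt_mono[OF xs, of j "Suc j"] j by auto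
  ultimately show ?thesis using True by (simp add: max_def)
next
  case False
  then show ?thesis using mono_poi_interp[OF xs] by (simp add: mono_def)
qed

lemma hgt_mono:
  assumes "sorted_wrt (<) hs" "\<forall>h \<in> set hs. b \<le> h \<and> h \<le> b + L" "0 \<le> L"
    and "t \<le> t'" "t' \<le> Suc (length hs)"
  shows "hgt b L hs t \<le> hgt b L hs t'"
proof -
  have "sorted (b # hs @ [b + L])"
    using assms(1-3) by (auto simp: sorted_append strict_sorted_imp_sorted)
  then show ?thesis using assms(4,5) by (simp add: hgt_def sorted_nth_mono)
qed

lemma hgt_0 [simp]: "hgt b L hs 0 = b"
  by (simp add: hgt_def)

lemma hgt_Suc: "i < length hs \<Longrightarrow> hgt b L hs (Suc i) = hs ! i"
  by (simp add: hgt_def nth_append)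

lemma hgt_last [simp]: "hgt b L hs (Suc (length hs)) = b + L"
  by (simp add: hgt_def nth_append)

text \<open>The rows of strip t inside the square on the diagonal containing abscissa X form the
  interval from max (hgt t) \<lfloor>X\<rfloor> to min (hgt (t+1)) (\<lfloor>X\<rfloor>+1); the cut height divides it in the
  ratio in which X divides [\<lfloor>X\<rfloor>, \<lfloor>X\<rfloor>+1].\<close>
definition cut_height :: "real \<Rightarrow> real \<Rightarrow> real list \<Rightarrow> real \<Rightarrow> nat \<Rightarrow> real" where
  "cut_height b L hs X t = max (hgt b L hs t) (of_int \<lfloor>X\<rfloor>) + frac X *
     (min (hgt b L hs (Suc t)) (of_int \<lfloor>X\<rfloor> + 1) - max (hgt b L hs t) (of_int \<lfloor>X\<rfloor>))"

lemma affine_combination_between: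
  fixes y0 y1 \<theta> :: real
  assumes "0 \<le> \<theta>" "\<theta> \<le> 1"
  shows "min y0 y1 \<le> y0 + \<theta> * (y1 - y0)" "y0 + \<theta> * (y1 - y0) \<le> max y0 y1"
proof -
  have "y0 + \<theta> * (y1 - y0) = (1 - \<theta>) * y0 + \<theta> * y1" by (simp add: algebra_simps)
  moreover have "(1 - \<theta>) * y0 + \<theta> * y1 \<le> (1 - \<theta>) * max y0 y1 + \<theta> * max y0 y1"
    using assms by (intro add_mono mult_left_mono) simp_all
  moreover have "(1 - \<theta>) * min y0 y1 + \<theta> * min y0 y1 \<le> (1 - \<theta>) * y0 + \<theta> * y1"
    using assms by (intro add_mono mult_left_mono) simp_all
  ultimately show "min y0 y1 \<le> y0 + \<theta> * (y1 - y0)" "y0 + \<theta> * (y1 - y0) \<le> max y0 y1"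
    by (simp_all add: algebra_simps)
qed

lemma cut_height_proportional:
  fixes h0 h1 X :: real and j :: int
  assumes "h0 \<le> h1"
  defines "C \<equiv> max h0 (of_int \<lfloor>X\<rfloor>) + frac X * (min h1 (of_int \<lfloor>X\<rfloor> + 1) - max h0 (of_int \<lfloor>X\<rfloor>))"
  shows "max 0 (min (min h1 (of_int j + 1)) C - max h0 (of_int j))
           = max 0 (min 1 (X - of_int j)) * max 0 (min h1 (of_int j + 1) - max h0 (of_int j))"
      (is ?below)
    and "max 0 (min h1 (of_int j + 1) - max (max h0 (of_int j)) C)
           = max 0 (min 1 (of_int j + 1 - X)) * max 0 (min h1 (of_int j + 1) - max h0 (of_int j))"
      (is ?above)
proof -
  define k where "k = \<lfloor>X\<rfloor>"
  define y0 where "y0 = max h0 (of_int k)"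
  define y1 where "y1 = min h1 (of_int k + 1)"
  define \<theta> where "\<theta> = frac X"
  have X: "X = of_int k + \<theta>" "0 \<le> \<theta>" "\<theta> < 1"
    unfolding k_def \<theta>_def by (simp_all add: frac_def[symmetric] frac_lt_1) (simp add: frac_def)
  have C: "C = y0 + \<theta> * (y1 - y0)" by (simp add: C_def y0_def y1_def \<theta>_def k_def)
  have C_between: "min y0 y1 \<le> C" "C \<le> max y0 y1"
    unfolding C using X(2,3) by (simp_all add: affine_combination_between)
  consider "j < k" | "j = k" | "k < j" by linarith
  then have "?below \<and> ?above"
  proof cases
    case 1
    then have "of_int j + 1 \<le> (of_int k :: real)" by linarith
    moreover from this have "min h1 (of_int j + 1) \<le> C" using C_between by (auto simp: y0_def y1_def)
    ultimately show ?thesis using X by auto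
  next
    case 3
    then have "of_int k + 1 \<le> (of_int j :: real)" by linarith
    moreover from this have "C \<le> max h0 (of_int j)" using C_between by (auto simp: y0_def y1_def)
    ultimately show ?thesis using X by auto
  next
    case 2
    then have j: "max h0 (of_int j) = y0" "min h1 (of_int j + 1) = y1"
      "min 1 (X - of_int j) = \<theta>" "min 1 (of_int j + 1 - X) = 1 - \<theta>"
      using X by (auto simp: y0_def y1_def)
    show ?thesis
    proof (cases "y0 \<le> y1")
      case True
      then have "min y1 C = C" "max y0 C = C" using C_between by auto
      then show ?thesis unfolding j using True X C by (auto simp: algebra_simps max_def)
    next
      case False
      then show ?thesis unfolding j using X by (auto simp: max_def)
    qed
  qed
  then show ?below ?above by blast+
qed

lemma card_below_threshold_eqI:
  fixes g :: "nat \<Rightarrow> real"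
  assumes "t \<le> H" "\<And>i. i < t \<Longrightarrow> g i \<le> x" "\<And>i. t \<le> i \<Longrightarrow> i < H \<Longrightarrow> x < g i"
  shows "card {i. i < H \<and> g i \<le> x} = t"
proof -
  have "i < H \<and> g i \<le> x \<longleftrightarrow> i < t" for i
    using assms(1) assms(2)[of i] assms(3)[of i] by (cases "i < t") auto
  then have "{i. i < H \<and> g i \<le> x} = {..<t}" by auto
  then show ?thesis by simp
qed

lemma card_below_threshold_bounds:
  fixes g :: "nat \<Rightarrow> real"
  assumes mono: "\<And>i i'. i \<le> i' \<Longrightarrow> i' < H \<Longrightarrow> g i \<le> g i'"
    and t: "card {i. i < H \<and> g i \<le> x} = t"
  shows "0 < t \<Longrightarrow> g (t - 1) \<le> x" and "t < H \<Longrightarrow> x < g t"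
proof -
  show "g (t - 1) \<le> x" if "0 < t"
  proof (rule ccontr)
    assume above: "\<not> g (t - 1) \<le> x"
    have "i < t - 1" if "i < H" "g i \<le> x" for i
    proof (rule ccontr)
      assume "\<not> i < t - 1"
      then have "g (t - 1) \<le> g i" using mono that(1) by simp
      then show False using above that(2) by simp
    qed
    then have "{i. i < H \<and> g i \<le> x} \<subseteq> {..<t - 1}" by blast
    then have "t \<le> t - 1" using t card_mono[of "{..<t - 1}"] by fastforce
    then show False using that by simp
  qed
  show "x < g t" if "t < H"
  proof (rule ccontr)
    assume "\<not> x < g t"
    then have "g i \<le> x" if "i \<le> t" for i using mono[OF that \<open>t < H\<close>] by simp
    then have "{..t} \<subseteq> {i. i < H \<and> g i \<le> x}" using \<open>t < H\<close> by auto
    then have "Suc t \<le> t" using t card_mono[of "{i. i < H \<and> g i \<le> x}" "{..t}"] by simp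
    then show False by simp
  qed
qed

definition strip_index :: "real list \<Rightarrow> real list \<Rightarrow> real \<Rightarrow> nat" where
  "strip_index xs hs x = card {i. i < length hs \<and> poi_interp xs (hs ! i) \<le> x}"

definition strip_label ::
  "real list \<Rightarrow> real \<Rightarrow> real \<Rightarrow> real list \<Rightarrow> (nat \<Rightarrow> real option) \<Rightarrow> (nat \<Rightarrow> bool) \<Rightarrow> nat \<Rightarrow> real \<Rightarrow> bool"
where
  "strip_label xs b L hs vert ori t x =
     (case vert t of Some X \<Rightarrow> (ori t \<longleftrightarrow> x < poi_interp xs (cut_height b L hs X t)) | None \<Rightarrow> ori t)"

text \<open>poi_interp maps each strip onto the interval between the images of its two horizontal
  segments, and x takes the label of the strip whose image contains it.\<close>
definition path_label ::
  "real list \<Rightarrow> real \<Rightarrow> real \<Rightarrow> real list \<Rightarrow> (nat \<Rightarrow> real option) \<Rightarrow> (nat \<Rightarrow> bool) \<Rightarrow> real \<Rightarrow> bool"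
where
  "path_label xs b L hs vert ori x = strip_label xs b L hs vert ori (strip_index xs hs x) x"

definition label_breaks :: "real list \<Rightarrow> real \<Rightarrow> real \<Rightarrow> real list \<Rightarrow> (nat \<Rightarrow> real option) \<Rightarrow> real set" where
  "label_breaks xs b L hs vert = poi_interp xs ` set hs \<union>
     (\<lambda>t. poi_interp xs (cut_height b L hs (the (vert t)) t)) ` {t \<in> {0..length hs}. vert t \<noteq> None}"

lemma strip_index_le: "strip_index xs hs x \<le> length hs"
proof -
  have "{i. i < length hs \<and> poi_interp xs (hs ! i) \<le> x} \<subseteq> {..<length hs}" by auto
  then show ?thesis unfolding strip_index_def using card_mono[of "{..<length hs}"] by fastforce
qed

lemma finite_label_breaks: "finite (label_breaks xs b L hs vert)"
  unfolding label_breaks_def by simp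

lemma card_label_breaks:
  "card (label_breaks xs b L hs vert) \<le> length hs + card {t \<in> {0..length hs}. vert t \<noteq> None}"
proof -
  let ?V = "{t \<in> {0..length hs}. vert t \<noteq> None}"
  have "card (label_breaks xs b L hs vert)
      \<le> card (poi_interp xs ` set hs) + card ((\<lambda>t. poi_interp xs (cut_height b L hs (the (vert t)) t)) ` ?V)"
    unfolding label_breaks_def by (rule card_Un_le)
  also have "\<dots> \<le> card (set hs) + card ?V"
    by (intro add_mono card_image_le) simp_all
  also have "\<dots> \<le> length hs + card ?V"
    by (simp add: card_length)
  finally show ?thesis .
qed

lemma changes_only_at_label_breaks:
  "changes_only_at (label_breaks xs b L hs vert) (path_label xs b L hs vert ori)"
  unfolding changes_only_at_def
proof (intro allI impI)
  fix x y assume xy: "x \<le> y" "{x..y} \<inter> label_breaks xs b L hs vert = {}"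
  have same_side: "z \<le> x \<longleftrightarrow> z \<le> y" "x < z \<longleftrightarrow> y < z" if "z \<in> label_breaks xs b L hs vert" for z
  proof -
    have "z \<notin> {x..y}" using xy(2) that by blast
    then show "z \<le> x \<longleftrightarrow> z \<le> y" "x < z \<longleftrightarrow> y < z" using xy(1) by auto
  qed
  have "{i. i < length hs \<and> poi_interp xs (hs ! i) \<le> x} = {i. i < length hs \<and> poi_interp xs (hs ! i) \<le> y}"
    using same_side(1) by (auto simp: label_breaks_def)
  then have index: "strip_index xs hs x = strip_index xs hs y"
    unfolding strip_index_def by simp
  define t where "t = strip_index xs hs y"
  have "t \<le> length hs" unfolding t_def by (rule strip_index_le)
  have "strip_label xs b L hs vert ori t x = strip_label xs b L hs vert ori t y"
  proof (cases "vert t")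
    case (Some X)
    then have "poi_interp xs (cut_height b L hs X t) \<in> label_breaks xs b L hs vert"
      using \<open>t \<le> length hs\<close> unfolding label_breaks_def by force
    then show ?thesis using same_side(2) Some by (simp add: strip_label_def)
  qed (simp add: strip_label_def)
  then show "path_label xs b L hs vert ori x = path_label xs b L hs vert ori y"
    unfolding path_label_def index t_def .
qed

section \<open>A single square\<close>

locale diagonal_square =
  fixes xs :: "real list" and a b L :: real and hs :: "real list"
    and vert :: "nat \<Rightarrow> real option" and ori :: "nat \<Rightarrow> bool" and j :: nat
  assumes sorted_xs: "sorted xs" and xs_range: "set xs \<subseteq> {0..1}"
    and hs_sorted: "sorted_wrt (<) hs" and hs_range: "\<forall>h \<in> set hs. b \<le> h \<and> h \<le> b + L"
    and j_range: "j \<in> {1..length xs - 1}"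
    and square_in_box: "square j \<subseteq> {a..a + L} \<times> {b..b + L}"
begin

abbreviation "\<Psi> \<equiv> poi_interp xs"
abbreviation "ht \<equiv> hgt b L hs"
abbreviation "Ij \<equiv> {pt xs j..pt xs (Suc j)}"
abbreviation "len \<equiv> pt xs (Suc j) - pt xs j"

lemma box_bounds: "a \<le> real j" "real j + 1 \<le> a + L" "b \<le> real j" "real j + 1 \<le> b + L"
proof -
  have "(real j, real j) \<in> square j" "(real j + 1, real j + 1) \<in> square j"
    by (auto simp: square_def)
  then show "a \<le> real j" "real j + 1 \<le> a + L" "b \<le> real j" "real j + 1 \<le> b + L"
    using square_in_box by auto
qed

lemma ht_mono: "t \<le> t' \<Longrightarrow> t' \<le> Suc (length hs) \<Longrightarrow> ht t \<le> ht t'"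
  using hgt_mono[OF hs_sorted hs_range] box_bounds by simp

lemma \<Psi>_mono: "u \<le> v \<Longrightarrow> \<Psi> u \<le> \<Psi> v"
  using mono_poi_interp[OF sorted_xs] by (simp add: mono_def)

lemma \<Psi>_max: "\<Psi> (max u v) = max (\<Psi> u) (\<Psi> v)" and \<Psi>_min: "\<Psi> (min u v) = min (\<Psi> u) (\<Psi> v)"
  using max_of_mono[OF mono_poi_interp[OF sorted_xs]] min_of_mono[OF mono_poi_interp[OF sorted_xs]]
  by simp_all

lemmas \<Psi>_of_nat = poi_interp_of_nat[OF j_range]

lemma hs_eq_ht: "i < length hs \<Longrightarrow> hs ! i = ht (Suc i)"
  by (simp add: hgt_Suc)

lemma strip_index_eqI:
  assumes t: "t \<le> length hs" and x: "\<Psi> (ht t) < x" "x < \<Psi> (ht (Suc t))"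
  shows "strip_index xs hs x = t"
  unfolding strip_index_def
proof (rule card_below_threshold_eqI[OF t])
  fix i assume "i < t"
  then have "\<Psi> (hs ! i) \<le> \<Psi> (ht t)" using t hs_eq_ht by (simp add: \<Psi>_mono ht_mono)
  then show "\<Psi> (hs ! i) \<le> x" using x by simp
next
  fix i assume "t \<le> i" "i < length hs"
  then have "\<Psi> (ht (Suc t)) \<le> \<Psi> (hs ! i)" using hs_eq_ht by (simp add: \<Psi>_mono ht_mono)
  then show "x < \<Psi> (hs ! i)" using x by simp
qed

lemma strip_index_bounds:
  assumes x: "x \<in> Ij" and t: "strip_index xs hs x = t"
  shows "\<Psi> (ht t) \<le> x" "x \<le> \<Psi> (ht (Suc t))"
proof -
  have mono: "\<Psi> (hs ! i) \<le> \<Psi> (hs ! i')" if "i \<le> i'" "i' < length hs" for i i'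
    using that hs_eq_ht by (simp add: \<Psi>_mono ht_mono)
  note bounds = card_below_threshold_bounds[OF mono t[unfolded strip_index_def]]
  have "t \<le> length hs" using t strip_index_le by blast
  show "\<Psi> (ht t) \<le> x"
  proof (cases t)
    case 0
    then show ?thesis using \<Psi>_mono[OF box_bounds(3)] \<Psi>_of_nat x by simp
  next
    case (Suc t')
    then show ?thesis using bounds(1) \<open>t \<le> length hs\<close> hs_eq_ht[of t'] by simp
  qed
  show "x \<le> \<Psi> (ht (Suc t))"
  proof (cases "t = length hs")
    case True
    then show ?thesis using \<Psi>_mono[OF box_bounds(4)] \<Psi>_of_nat x by simp
  next
    case False
    then show ?thesis using bounds(2) \<open>t \<le> length hs\<close> hs_eq_ht[of t] by simp
  qed
qed

lemma strip_preimage_between: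
  assumes t: "t \<le> length hs"
  defines "lo \<equiv> \<Psi> (max (ht t) (real j))" and "hi \<equiv> \<Psi> (min (ht (Suc t)) (real j + 1))"
  shows "{lo<..<hi} \<subseteq> {x \<in> Ij. strip_index xs hs x = t}"
    and "{x \<in> Ij. strip_index xs hs x = t} \<subseteq> {lo..hi}"
proof -
  have lo: "lo = max (\<Psi> (ht t)) (pt xs j)" and hi: "hi = min (\<Psi> (ht (Suc t))) (pt xs (Suc j))"
    by (simp_all add: lo_def hi_def \<Psi>_max \<Psi>_min \<Psi>_of_nat)
  show "{lo<..<hi} \<subseteq> {x \<in> Ij. strip_index xs hs x = t}"
    using strip_index_eqI[OF t] by (auto simp: lo hi)
  show "{x \<in> Ij. strip_index xs hs x = t} \<subseteq> {lo..hi}"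
    using strip_index_bounds by (auto simp: lo hi)
qed

definition "label_piece t = {x \<in> Ij. strip_index xs hs x = t \<and> strip_label xs b L hs vert ori t x}"

definition "plus_section t = {x \<in> {real j..real j + 1}.
  case vert t of Some X \<Rightarrow> (if ori t then x < X else X < x) | None \<Rightarrow> ori t}"

definition "strip_rows t = {ht t..ht (Suc t)} \<inter> {real j..real j + 1}"

lemma label_piece_bounds_cut:
  assumes t: "t \<le> length hs" and X: "vert t = Some X"
  defines "y0 \<equiv> max (ht t) (real j)" and "y1 \<equiv> min (ht (Suc t)) (real j + 1)"
  obtains u v \<alpha> \<beta> where
    "{\<Psi> u<..<\<Psi> v} \<subseteq> label_piece t" "label_piece t \<subseteq> {\<Psi> u..\<Psi> v}" "real j \<le> u" "v \<le> real j + 1"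
    "{\<alpha><..<\<beta>} \<subseteq> plus_section t" "plus_section t \<subseteq> {\<alpha>..\<beta>}"
    "max 0 (v - u) = max 0 (\<beta> - \<alpha>) * max 0 (y1 - y0)"
proof -
  define U where "U = {x \<in> Ij. strip_index xs hs x = t}"
  have U: "{\<Psi> y0<..<\<Psi> y1} \<subseteq> U" "U \<subseteq> {\<Psi> y0..\<Psi> y1}"
    using strip_preimage_between[OF t] unfolding U_def y0_def y1_def by blast+
  have y0: "real j \<le> y0" and y1: "y1 \<le> real j + 1" by (simp_all add: y0_def y1_def)
  define C where "C = cut_height b L hs X t"
  have "ht t \<le> ht (Suc t)" using t by (simp add: ht_mono)
  note proportional = cut_height_proportional[OF this, where X = X and j = "int j"]
  show thesis
  proof (cases "ori t")
    case True
    have D: "label_piece t = U \<inter> {x. x < \<Psi> C}"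
      using X True by (auto simp: label_piece_def U_def strip_label_def C_def)
    have A: "plus_section t = {x \<in> {real j..real j + 1}. x < X}"
      using X True by (simp add: plus_section_def)
    show thesis
    proof (rule that[of y0 "min y1 C" "real j" "min (real j + 1) X"])
      show "{\<Psi> y0<..<\<Psi> (min y1 C)} \<subseteq> label_piece t" "label_piece t \<subseteq> {\<Psi> y0..\<Psi> (min y1 C)}"
        using U by (auto simp: D \<Psi>_min)
      show "real j \<le> y0" "min y1 C \<le> real j + 1" using y0 y1 by auto
      show "{real j<..<min (real j + 1) X} \<subseteq> plus_section t" "plus_section t \<subseteq> {real j..min (real j + 1) X}"
        by (auto simp: A)
      have "min 1 (X - real j) = min (real j + 1) X - real j" by simp
      then show "max 0 (min y1 C - y0) = max 0 (min (real j + 1) X - real j) * max 0 (y1 - y0)"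
        using proportional(1) by (simp add: y0_def y1_def C_def cut_height_def)
    qed
  next
    case False
    have D: "label_piece t = U \<inter> {x. \<Psi> C \<le> x}"
      using X False by (auto simp: label_piece_def U_def strip_label_def C_def not_less)
    have A: "plus_section t = {x \<in> {real j..real j + 1}. X < x}"
      using X False by (simp add: plus_section_def)
    show thesis
    proof (rule that[of "max y0 C" y1 "max (real j) X" "real j + 1"])
      show "{\<Psi> (max y0 C)<..<\<Psi> y1} \<subseteq> label_piece t" "label_piece t \<subseteq> {\<Psi> (max y0 C)..\<Psi> y1}"
        using U by (auto simp: D \<Psi>_max)
      show "real j \<le> max y0 C" "y1 \<le> real j + 1" using y0 y1 by auto
      show "{max (real j) X<..<real j + 1} \<subseteq> plus_section t" "plus_section t \<subseteq> {max (real j) X..real j + 1}"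
        by (auto simp: A)
      have "min 1 (real j + 1 - X) = real j + 1 - max (real j) X" by simp
      then show "max 0 (y1 - max y0 C) = max 0 (real j + 1 - max (real j) X) * max 0 (y1 - y0)"
        using proportional(2) by (simp add: y0_def y1_def C_def cut_height_def)
    qed
  qed
qed

lemma label_piece_bounds:
  assumes t: "t \<le> length hs"
  defines "y0 \<equiv> max (ht t) (real j)" and "y1 \<equiv> min (ht (Suc t)) (real j + 1)"
  obtains u v \<alpha> \<beta> where
    "{\<Psi> u<..<\<Psi> v} \<subseteq> label_piece t" "label_piece t \<subseteq> {\<Psi> u..\<Psi> v}" "real j \<le> u" "v \<le> real j + 1"
    "{\<alpha><..<\<beta>} \<subseteq> plus_section t" "plus_section t \<subseteq> {\<alpha>..\<beta>}"
    "max 0 (v - u) = max 0 (\<beta> - \<alpha>) * max 0 (y1 - y0)"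
proof (cases "vert t")
  case None
  show thesis
  proof (cases "ori t")
    case True
    then have "label_piece t = {x \<in> Ij. strip_index xs hs x = t}" "plus_section t = {real j..real j + 1}"
      using None by (auto simp: label_piece_def plus_section_def strip_label_def)
    then show thesis
      using strip_preimage_between[OF t] by (intro that[of y0 y1 "real j" "real j + 1"]) (auto simp: y0_def y1_def)
  next
    case False
    then have "label_piece t = {}" "plus_section t = {}"
      using None by (auto simp: label_piece_def plus_section_def strip_label_def)
    then show thesis by (intro that[of "real j" "real j" "real j" "real j"]) simp_all
  qed
next
  case (Some X)
  show thesis
    by (rule label_piece_bounds_cut[OF t Some]) (rule that; simp add: y0_def y1_def)
qed

lemma measure_label_piece:
  assumes t: "t \<le> length hs"
  shows "label_piece t \<in> fmeasurable lborel" "plus_section t \<in> fmeasurable lborel"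
    "strip_rows t \<in> fmeasurable lborel"
    "measure lborel (label_piece t) = len * (measure lborel (plus_section t) * measure lborel (strip_rows t))"
proof -
  define y0 where "y0 = max (ht t) (real j)"
  define y1 where "y1 = min (ht (Suc t)) (real j + 1)"
  have rows: "strip_rows t = {y0..y1}" by (auto simp: strip_rows_def y0_def y1_def)
  then show "strip_rows t \<in> fmeasurable lborel" by simp
  have rows_measure: "measure lborel (strip_rows t) = max 0 (y1 - y0)"
    unfolding rows by (rule measure_lborel_between) auto
  obtain u v \<alpha> \<beta> where D: "{\<Psi> u<..<\<Psi> v} \<subseteq> label_piece t" "label_piece t \<subseteq> {\<Psi> u..\<Psi> v}"
    and uv: "real j \<le> u" "v \<le> real j + 1"
    and A: "{\<alpha><..<\<beta>} \<subseteq> plus_section t" "plus_section t \<subseteq> {\<alpha>..\<beta>}"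
    and ratio: "max 0 (v - u) = max 0 (\<beta> - \<alpha>) * max 0 (y1 - y0)"
    using label_piece_bounds[OF t] unfolding y0_def y1_def by blast
  show "label_piece t \<in> fmeasurable lborel" "plus_section t \<in> fmeasurable lborel"
    using measure_lborel_between(1) D A by blast+
  have "measure lborel (label_piece t) = max 0 (\<Psi> v - \<Psi> u)"
    using measure_lborel_between(2)[OF D] .
  also have "\<dots> = len * max 0 (v - u)"
    using poi_interp_diff[OF sorted_xs j_range uv] .
  also have "\<dots> = len * (measure lborel (plus_section t) * measure lborel (strip_rows t))"
    unfolding ratio rows_measure measure_lborel_between(2)[OF A] ..
  finally show "measure lborel (label_piece t) = len * (measure lborel (plus_section t) * measure lborel (strip_rows t))" .
qed

lemma label_set_eq: "{x \<in> Ij. path_label xs b L hs vert ori x} = (\<Union>t \<in> {0..length hs}. label_piece t)"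
  using strip_index_le by (fastforce simp: label_piece_def path_label_def)

lemma measure_label_set:
  "{x \<in> Ij. path_label xs b L hs vert ori x} \<in> sets lborel"
  "measure lborel {x \<in> Ij. path_label xs b L hs vert ori x} = (\<Sum>t = 0..length hs. measure lborel (label_piece t))"
proof -
  have pieces: "label_piece t \<in> fmeasurable lborel" if "t \<in> {0..length hs}" for t
    using that measure_label_piece by simp
  then show "{x \<in> Ij. path_label xs b L hs vert ori x} \<in> sets lborel"
    unfolding label_set_eq by blast
  show "measure lborel {x \<in> Ij. path_label xs b L hs vert ori x} = (\<Sum>t = 0..length hs. measure lborel (label_piece t))"
    unfolding label_set_eq using pieces
    by (intro measure_UNION') (auto simp: pairwise_def disjnt_def label_piece_def)
qed

lemma Rplus_square_eq: "Rplus a b L hs vert ori \<inter> square j = (\<Union>t \<in> {0..length hs}. plus_section t \<times> strip_rows t)"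
  using box_bounds(1,2) unfolding Rplus_def plus_section_def strip_rows_def square_def
  by (auto split: option.splits)

lemma strip_rows_overlap_null:
  assumes "s < t" "t \<le> length hs"
  shows "(plus_section s \<times> strip_rows s) \<inter> (plus_section t \<times> strip_rows t) \<in> null_sets lborel"
proof -
  define N where "N = {real j..real j + 1} \<times> {ht (Suc s)..ht (Suc s)}"
  have "N \<in> fmeasurable lborel" "measure lborel N = 0"
    unfolding N_def using measure_lborel_Times[OF fmeasurable_Icc_real fmeasurable_Icc_real,
        of "real j" "real j + 1" "ht (Suc s)" "ht (Suc s)"] by simp_all
  then have null: "N \<in> null_sets lborel" by (auto simp: null_sets_def emeasure_eq_measure2)
  have "ht (Suc s) \<le> ht t" using assms by (simp add: ht_mono)
  then have sub: "(plus_section s \<times> strip_rows s) \<inter> (plus_section t \<times> strip_rows t) \<subseteq> N"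
    unfolding N_def plus_section_def strip_rows_def by auto
  have "plus_section r \<times> strip_rows r \<in> sets lborel" if "r \<le> length hs" for r
    using measure_lborel_Times(1)[OF measure_label_piece(2,3)[OF that]] by (rule fmeasurableD)
  then have "(plus_section s \<times> strip_rows s) \<inter> (plus_section t \<times> strip_rows t) \<in> sets lborel"
    using assms by (intro sets.Int) simp_all
  then show ?thesis by (rule null_sets_subset[OF null _ sub])
qed

lemma measure_Rplus_square:
  "Rplus a b L hs vert ori \<inter> square j \<in> fmeasurable lborel"
  "measure lborel (Rplus a b L hs vert ori \<inter> square j)
     = (\<Sum>t = 0..length hs. measure lborel (plus_section t) * measure lborel (strip_rows t))"
proof -
  have pieces: "plus_section t \<times> strip_rows t \<in> fmeasurable lborel"
    "measure lborel (plus_section t \<times> strip_rows t) = measure lborel (plus_section t) * measure lborel (strip_rows t)"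
    if "t \<in> {0..length hs}" for t
    using that measure_label_piece measure_lborel_Times by simp_all
  then show "Rplus a b L hs vert ori \<inter> square j \<in> fmeasurable lborel"
    unfolding Rplus_square_eq by (intro fmeasurable.finite_UN) auto
  have "pairwise (\<lambda>s t. AE x in lborel. x \<notin> plus_section s \<times> strip_rows s \<or> x \<notin> plus_section t \<times> strip_rows t) {0..length hs}"
  proof (rule pairwiseI)
    fix s t assume "s \<in> {0..length hs}" "t \<in> {0..length hs}" "s \<noteq> t"
    then have "(plus_section s \<times> strip_rows s) \<inter> (plus_section t \<times> strip_rows t) \<in> null_sets lborel"
      using strip_rows_overlap_null[of s t] strip_rows_overlap_null[of t s] by (cases "s < t") (auto simp: Int_commute)
    then show "AE x in lborel. x \<notin> plus_section s \<times> strip_rows s \<or> x \<notin> plus_section t \<times> strip_rows t"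
      by (rule AE_I') auto
  qed
  then show "measure lborel (Rplus a b L hs vert ori \<inter> square j)
     = (\<Sum>t = 0..length hs. measure lborel (plus_section t) * measure lborel (strip_rows t))"
    unfolding Rplus_square_eq using pieces by (subst measure_UNION_AE) auto
qed

lemma measure_label_set_eq_Rplus:
  "measure lborel {x \<in> Ij. path_label xs b L hs vert ori x} = len * measure lborel (Rplus a b L hs vert ori \<inter> square j)"
  unfolding measure_label_set measure_Rplus_square sum_distrib_left
  using measure_label_piece by simp

lemma measure_Rminus_square:
  "measure lborel (Rminus a b L hs vert ori \<inter> square j) = 1 - measure lborel (Rplus a b L hs vert ori \<inter> square j)"
proof -
  have "Rminus a b L hs vert ori \<inter> square j = square j - (Rplus a b L hs vert ori \<inter> square j)"
    unfolding Rminus_def using square_in_box by auto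
  moreover have "square j \<in> fmeasurable lborel" and square_measure: "measure lborel (square j) = 1"
    unfolding square_def using measure_lborel_Times[OF fmeasurable_Icc_real fmeasurable_Icc_real,
        of "real j" "real j + 1" "real j" "real j + 1"] by simp_all
  ultimately show ?thesis
    using measurable_measure_Diff[of "square j" lborel "Rplus a b L hs vert ori \<inter> square j"]
      measure_Rplus_square(1) square_measure by auto
qed

lemma Ij_in_unit_interval: "Ij \<subseteq> {0..1}" "pt xs j \<le> pt xs (Suc j)"
proof -
  have "pt xs j \<in> set xs" "pt xs (Suc j) \<in> set xs" using j_range by (auto simp: pt_def)
  then show "Ij \<subseteq> {0..1}" "pt xs j \<le> pt xs (Suc j)"
    using xs_range j_range pt_mono[OF sorted_xs, of j "Suc j"] by auto
qed

lemma measure_eq_Rplus_if_agrees: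
  assumes A: "A \<in> sets lborel"
    and agree: "\<And>x. x \<in> {0..1} - label_breaks xs b L hs vert \<Longrightarrow> x \<in> A \<longleftrightarrow> path_label xs b L hs vert ori x"
  shows "measure lborel (A \<inter> Ij) = len * measure lborel (Rplus a b L hs vert ori \<inter> square j)"
proof -
  have "measure lborel (A \<inter> Ij) = measure lborel {x \<in> Ij. path_label xs b L hs vert ori x}"
  proof (rule measure_eq_if_eq_outside_finite[OF _ measure_label_set(1) finite_label_breaks])
    show "A \<inter> Ij \<in> sets lborel" using A by simp
    show "A \<inter> Ij - label_breaks xs b L hs vert
        = {x \<in> Ij. path_label xs b L hs vert ori x} - label_breaks xs b L hs vert"
      using agree Ij_in_unit_interval(1) by blast
  qed
  also have "\<dots> = len * measure lborel (Rplus a b L hs vert ori \<inter> square j)"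
    by (rule measure_label_set_eq_Rplus)
  finally show ?thesis .
qed

lemma measure_ch_part_Not_eq_Rminus:
  assumes "measure lborel (ch_part ts s \<inter> Ij) = len * measure lborel (Rplus a b L hs vert ori \<inter> square j)"
  shows "measure lborel (ch_part ts (\<not> s) \<inter> Ij) = len * measure lborel (Rminus a b L hs vert ori \<inter> square j)"
  by (simp add: measure_ch_part_Not[OF Ij_in_unit_interval] assms measure_Rminus_square algebra_simps)

end

lemma sum_adjacent_pairs:
  fixes f :: "nat \<Rightarrow> nat"
  shows "(\<Sum>t = 1..H. f (t - 1) + f t) + f 0 + f H = 2 * (\<Sum>t = 0..H. f t)"
  by (induction H) simp_all

lemma sc_turns_bound:
  assumes "ymono_scpath a b L hs vert ori"
  shows "length hs + card {t \<in> {0..length hs}. vert t \<noteq> None} \<le> sc_turns hs vert + 1"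
proof -
  define H where "H = length hs"
  define v where "v t = (if vert t \<noteq> None then 1 else 0 :: nat)" for t
  have card: "card {t \<in> {0..H}. vert t \<noteq> None} = (\<Sum>t = 0..H. v t)"
    by (simp add: v_def sum.If_cases Int_def)
  have turns: "sc_turns hs vert = (\<Sum>t = 1..H. v (t - 1) + v t)"
    by (simp add: sc_turns_def v_def H_def)
  show ?thesis
  proof (cases "H = 0")
    case True
    then have "vert 0 \<noteq> None" using assms by (simp add: ymono_scpath_def H_def)
    then show ?thesis using True unfolding H_def[symmetric] card turns by (simp add: v_def)
  next
    case False
    txt \<open>All strips strictly between the first and the last one contain a vertical segment.\<close>
    have "(\<Sum>t = 1..<H. v t) = H - 1"
      using assms by (simp add: ymono_scpath_def v_def H_def)
    moreover have "{0..H} = insert 0 (insert H {1..<H})" using False by auto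
    ultimately have "(\<Sum>t = 0..H. v t) = v 0 + v H + (H - 1)" using False by simp
    then show ?thesis
      using sum_adjacent_pairs[of v H] unfolding H_def[symmetric] card turns by simp
  qed
qed

lemma ch_values_from_ymono_path:
  assumes blocks: "\<forall>i \<in> {1..n}. block_valuation k' (B i)"
    and path: "ymono_scpath a b L hs vert ori"
    and squares: "\<forall>j \<in> {1..length (poi n B) - 1}. square j \<subseteq> {a..a + L} \<times> {b..b + L}"
  obtains ts s where "sorted ts" "set ts \<subseteq> {0..1}" "length ts \<le> sc_turns hs vert + 1"
    and "\<And>i. i \<in> {1..n} \<Longrightarrow> val (B i) (ch_part ts s) = mu B (poi n B) i (Rplus a b L hs vert ori)"
    and "\<And>i. i \<in> {1..n} \<Longrightarrow> val (B i) (ch_part ts (\<not> s)) = mu B (poi n B) i (Rminus a b L hs vert ori)"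
proof -
  have xs: "sorted_wrt (<) (poi n B)" "set (poi n B) \<subseteq> {0..1}"
    using poi_strict_sorted set_poi_subset[OF blocks] by blast+
  obtain ts s where ts: "sorted ts" "set ts \<subseteq> {0..1}" "length ts \<le> card (label_breaks (poi n B) b L hs vert)"
    and agree: "\<And>x. x \<in> {0..1} - label_breaks (poi n B) b L hs vert \<Longrightarrow>
      x \<in> ch_part ts s \<longleftrightarrow> path_label (poi n B) b L hs vert ori x"
    using finite_label_breaks changes_only_at_label_breaks by (rule alternating_cuts_in_unit_interval) blast
  have length: "length ts \<le> sc_turns hs vert + 1"
    using ts(3) card_label_breaks[of "poi n B" b L hs vert] sc_turns_bound[OF path] by linarith
  have square: "diagonal_square (poi n B) a b L hs j" if "j \<in> {1..length (poi n B) - 1}" for j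
    using xs path squares that by unfold_locales (auto simp: ymono_scpath_def strict_sorted_imp_sorted)
  have endpoints: "\<forall>(l, r, c) \<in> set (B i). l \<in> set (poi n B) \<and> r \<in> set (poi n B) \<and> l < r"
    if i: "i \<in> {1..n}" for i
  proof (intro ballI, clarify)
    fix l r c assume "(l, r, c) \<in> set (B i)"
    moreover have "block_valuation k' (B i)" using blocks i by blast
    ultimately show "l \<in> set (poi n B) \<and> r \<in> set (poi n B) \<and> l < r"
      using block_in_poi[OF i] by blast
  qed
  have plus: "val (B i) (ch_part ts s) = mu B (poi n B) i (Rplus a b L hs vert ori)" if i: "i \<in> {1..n}" for i
  proof (rule val_eq_mu[where B = B and i = i, OF xs(1) endpoints[OF i] ch_part_sets])
    fix j assume "j \<in> {1..length (poi n B) - 1}"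
    then interpret diagonal_square "poi n B" a b L hs vert ori j by (rule square)
    show "measure lborel (ch_part ts s \<inter> Ij) = len * measure lborel (Rplus a b L hs vert ori \<inter> square j)"
      using ch_part_sets agree by (rule measure_eq_Rplus_if_agrees)
  qed
  have minus: "val (B i) (ch_part ts (\<not> s)) = mu B (poi n B) i (Rminus a b L hs vert ori)" if i: "i \<in> {1..n}" for i
  proof (rule val_eq_mu[where B = B and i = i, OF xs(1) endpoints[OF i] ch_part_sets])
    fix j assume "j \<in> {1..length (poi n B) - 1}"
    then interpret diagonal_square "poi n B" a b L hs vert ori j by (rule square)
    show "measure lborel (ch_part ts (\<not> s) \<inter> Ij) = len * measure lborel (Rminus a b L hs vert ori \<inter> square j)"
      by (rule measure_ch_part_Not_eq_Rminus[OF measure_eq_Rplus_if_agrees[OF ch_part_sets agree]])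
  qed
  from ts(1,2) length plus minus show thesis by (rule that)
qed

theorem mainTheorem13:
  fixes n k' k :: nat and B :: "nat \<Rightarrow> block list" and \<epsilon> a b L :: real
    and hs :: "real list" and vert :: "nat \<Rightarrow> real option" and ori :: "nat \<Rightarrow> bool"
  assumes blocks: "\<forall>i \<in> {1..n}. block_valuation k' (B i)"
    and Lpos: "0 < L"
    and bounding: "\<forall>j \<in> {1..length (poi n B) - 1}. square j \<subseteq> {a..a + L} \<times> {b..b + L}"
    and path: "ymono_scpath a b L hs vert ori"
    and turns: "sc_turns hs vert = k"
    and balanced: "\<forall>i \<in> {1..n}.
        \<bar>mu B (poi n B) i (Rplus a b L hs vert ori) - mu B (poi n B) i (Rminus a b L hs vert ori)\<bar> \<le> \<epsilon>"
  shows "\<exists>ts s. sorted ts \<and> set ts \<subseteq> {0..1} \<and> length ts \<le> k + 1 \<and>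
           (\<forall>i \<in> {1..n}. \<bar>val (B i) (ch_part ts s) - val (B i) (ch_part ts (\<not> s))\<bar> \<le> \<epsilon>)"
proof -
  obtain ts s where ts: "sorted ts" "set ts \<subseteq> {0..1}" "length ts \<le> k + 1"
    and plus: "\<And>i. i \<in> {1..n} \<Longrightarrow> val (B i) (ch_part ts s) = mu B (poi n B) i (Rplus a b L hs vert ori)"
    and minus: "\<And>i. i \<in> {1..n} \<Longrightarrow> val (B i) (ch_part ts (\<not> s)) = mu B (poi n B) i (Rminus a b L hs vert ori)"
    by (rule ch_values_from_ymono_path[OF blocks path bounding, unfolded turns]) blast
  have "\<bar>val (B i) (ch_part ts s) - val (B i) (ch_part ts (\<not> s))\<bar> \<le> \<epsilon>" if "i \<in> {1..n}" for i
    using balanced that by (simp add: plus minus)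
  with ts show ?thesis by blast
qed

end
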